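(* Suppose $G$ consists of a single strongly connected component and at least one vertex of $G$ has out-degree at least two. Then the flow $\psi$ on $\Delta$ has sensitive dependence on initial conditions.
   Context: $G$ is a finite directed graph (loops allowed) with vertex set $V$. $\Omega$ is the set of bi-infinite paths in $G$, i.e. sequences $(x_i)_{i\in\mathbb Z}\in V^{\mathbb Z}$ such that for every $i$ there is an edge from $x_i$ to $x_{i+1}$. Fix $h>0$. $\bar\Delta$ is the set of functions $x:\mathbb R\to V$ that are constant on each interval $[nh,(n+1)h)$, $n\in\mathbb Z$, and satisfy $(x(ih))_{i\in\mathbb Z}\in\Omega$. $\Delta=\{x(\cdot+t): x\in\bar\Delta,\ t\in\mathbb R\}$, with metric $d(x,y)=\sum_{i\in\mathbb Z}4^{-|i|}\frac1h\int_{ih}^{(i+1)h}\delta(x,y,t)\,dt$, where $\delta(x,y,t)=1$ if $x(t)\ne y(t)$ and $0$ otherwise. The flow $\psi:\mathbb R\times\Delta\to\Delta$ is $\psi(t,x)=x(\cdot+t)$. "$G$ consists of a single strongly connected component" means that for all $u,v\in V$ (including $u=v$) there is a directed path of positive length from $u$ to $v$. A flow $\Phi$ on a metric space $X$ has sensitive dependence on initial conditions if there is $\delta>0$ such that for every $x\in X$ and every neighborhood $B$ of $x$ there are $y\in B$ and $t>0$ with $d(\Phi_t(x),\Phi_t(y))>\delta$. *)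

theory Defs
  imports "HOL-Analysis.Analysis"
begin

definition strongly_connected_single :: "'v set \<Rightarrow> ('v \<times> 'v) set \<Rightarrow> bool" where
  "strongly_connected_single V E \<longleftrightarrow> (\<forall>u\<in>V. \<forall>v\<in>V. (u, v) \<in> E\<^sup>+)"

definition out_degree :: "('v \<times> 'v) set \<Rightarrow> 'v \<Rightarrow> nat" where
  "out_degree E v = card {w. (v, w) \<in> E}"

definition bi_paths :: "'v set \<Rightarrow> ('v \<times> 'v) set \<Rightarrow> (int \<Rightarrow> 'v) set" where
  "bi_paths V E = {x. (\<forall>i. x i \<in> V) \<and> (\<forall>i. (x i, x (i + 1)) \<in> E)}"

definition Delta_bar :: "'v set \<Rightarrow> ('v \<times> 'v) set \<Rightarrow> real \<Rightarrow> (real \<Rightarrow> 'v) set" where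
  "Delta_bar V E h = {x. (\<forall>n::int. \<forall>t. real_of_int n * h \<le> t \<and> t < real_of_int (n + 1) * h
        \<longrightarrow> x t = x (real_of_int n * h))
     \<and> (\<lambda>i::int. x (real_of_int i * h)) \<in> bi_paths V E}"

definition Delta :: "'v set \<Rightarrow> ('v \<times> 'v) set \<Rightarrow> real \<Rightarrow> (real \<Rightarrow> 'v) set" where
  "Delta V E h = {(\<lambda>s. x (s + t)) | x t. x \<in> Delta_bar V E h}"

definition dist_Delta :: "real \<Rightarrow> (real \<Rightarrow> 'v) \<Rightarrow> (real \<Rightarrow> 'v) \<Rightarrow> real" where
  "dist_Delta h x y = (\<Sum>\<^sub>\<infinity>i::int. (1/4) ^ nat \<bar>i\<bar> * ((1 / h) *
      integral {real_of_int i * h .. real_of_int (i + 1) * h} (\<lambda>t. if x t \<noteq> y t then 1 else 0)))"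

definition psi :: "real \<Rightarrow> (real \<Rightarrow> 'v) \<Rightarrow> (real \<Rightarrow> 'v)" where
  "psi t x = (\<lambda>s. x (s + t))"

text \<open>A neighbourhood B of x contains an open ball {y \<in> X. d x y < e}, so quantifying over
  neighbourhoods amounts to quantifying over such balls.\<close>
definition sensitive_dependence ::
  "'a set \<Rightarrow> ('a \<Rightarrow> 'a \<Rightarrow> real) \<Rightarrow> (real \<Rightarrow> 'a \<Rightarrow> 'a) \<Rightarrow> bool" where
  "sensitive_dependence X d Phi \<longleftrightarrow>
     (\<exists>\<delta>>0. \<forall>x\<in>X. \<forall>B. (\<exists>e>0. {y\<in>X. d x y < e} \<subseteq> B) \<longrightarrow>
        (\<exists>y\<in>B \<inter> X. \<exists>t>0. d (Phi t x) (Phi t y) > \<delta>))"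

end

theory Submission
  imports Defs
begin

text \<open>Strong connectivity makes a vertex with two distinct successors reachable from
  everywhere, so every bi-infinite path can be rerouted after any time \<open>N\<close> to disagree with
  the original at some later time \<open>m\<close>. The two step functions then agree on the first
  \<open>L\<close> blocks, which forces their distance below \<open>4 \<cdot> 2\<^sup>-\<^sup>L\<close>, while shifting time so that
  block \<open>m\<close> becomes block \<open>0\<close> (weight \<open>1\<close>) makes their distance at least \<open>1\<close>.\<close>

lemma sum_power_inj_le:
  fixes c :: real
  assumes "0 \<le> c" "c < 1" "finite F" "inj_on g F"
  shows "(\<Sum>i\<in>F. c ^ g i) \<le> 1 / (1 - c)"
proof -
  have "(\<Sum>i\<in>F. c ^ g i) = (\<Sum>n\<in>g ` F. c ^ n)" using assms by (simp add: sum.reindex)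
  also have "\<dots> \<le> (\<Sum>n. c ^ n)"
    by (rule sum_le_suminf) (use assms in \<open>auto intro: summable_geometric\<close>)
  also have "\<dots> = 1 / (1 - c)" using suminf_geometric[of c] assms by auto
  finally show ?thesis .
qed

lemma sum_power_nat_abs_le:
  fixes c :: real and F :: "int set"
  assumes "0 \<le> c" "c < 1" "finite F"
  shows "(\<Sum>i\<in>F. c ^ nat \<bar>i\<bar>) \<le> 2 / (1 - c)"
proof -
  have inj: "inj_on (\<lambda>i. nat \<bar>i\<bar>) (F \<inter> {0..})" "inj_on (\<lambda>i. nat \<bar>i\<bar>) (F \<inter> {..<0})"
    by (auto intro!: inj_onI)
  have "(\<Sum>i\<in>F. c ^ nat \<bar>i\<bar>) = (\<Sum>i\<in>F \<inter> {0..}. c ^ nat \<bar>i\<bar>) + (\<Sum>i\<in>F \<inter> {..<0}. c ^ nat \<bar>i\<bar>)"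
    using assms(3) by (subst sum.union_disjoint[symmetric]) (auto intro: sum.cong)
  also have "\<dots> \<le> 1 / (1 - c) + 1 / (1 - c)"
    using assms inj by (intro add_mono sum_power_inj_le) auto
  finally show ?thesis by simp
qed

text \<open>No integrability is needed: a non-integrable function has integral \<open>0\<close>.\<close>

lemma integral_indicator_bounds:
  fixes a b :: real
  assumes "a \<le> b"
  shows "0 \<le> integral {a..b} (\<lambda>t. if P t then 1 else 0::real)"
    and "integral {a..b} (\<lambda>t. if P t then 1 else 0::real) \<le> b - a"
proof -
  let ?f = "\<lambda>t. if P t then 1 else 0::real"
  show "0 \<le> integral {a..b} ?f"
    by (cases "?f integrable_on {a..b}") (auto intro: integral_nonneg simp: not_integrable_integral)
  show "integral {a..b} ?f \<le> b - a"
  proof (cases "?f integrable_on {a..b}")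
    case True
    then have "integral {a..b} ?f \<le> integral {a..b} (\<lambda>_. 1::real)"
      by (intro integral_le) auto
    then show ?thesis using assms by simp
  qed (use assms in \<open>simp add: not_integrable_integral\<close>)
qed

definition dist_Delta_term :: "real \<Rightarrow> (real \<Rightarrow> 'v) \<Rightarrow> (real \<Rightarrow> 'v) \<Rightarrow> int \<Rightarrow> real" where
  "dist_Delta_term h x y i = (1/4) ^ nat \<bar>i\<bar> * ((1 / h) *
      integral {real_of_int i * h .. real_of_int (i + 1) * h} (\<lambda>t. if x t \<noteq> y t then 1 else 0))"

lemma dist_Delta_eq_infsum: "dist_Delta h x y = (\<Sum>\<^sub>\<infinity>i. dist_Delta_term h x y i)"
  unfolding dist_Delta_def dist_Delta_term_def ..

lemma dist_Delta_term_bounds: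
  assumes "h > 0"
  shows "0 \<le> dist_Delta_term h x y i" "dist_Delta_term h x y i \<le> (1/4) ^ nat \<bar>i\<bar>"
proof -
  define q where "q = (1/h) *
    integral {real_of_int i * h .. real_of_int (i + 1) * h} (\<lambda>t. if x t \<noteq> y t then 1 else 0::real)"
  have "real_of_int i * h \<le> real_of_int (i + 1) * h" using assms by (simp add: distrib_right)
  from integral_indicator_bounds[OF this, of "\<lambda>t. x t \<noteq> y t"]
  have "0 \<le> q" "q \<le> 1" using assms unfolding q_def by (auto simp: distrib_right field_simps)
  moreover have "dist_Delta_term h x y i = (1/4) ^ nat \<bar>i\<bar> * q"
    unfolding dist_Delta_term_def q_def ..
  ultimately show "0 \<le> dist_Delta_term h x y i" "dist_Delta_term h x y i \<le> (1/4) ^ nat \<bar>i\<bar>"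
    by (simp_all add: mult_left_le)
qed

lemma dist_Delta_term_summable:
  assumes "h > 0"
  shows "dist_Delta_term h x y summable_on UNIV"
proof (rule nonneg_bdd_above_summable_on)
  show "0 \<le> dist_Delta_term h x y i" for i using dist_Delta_term_bounds[OF assms] by blast
  show "bdd_above (sum (dist_Delta_term h x y) ` {F. F \<subseteq> UNIV \<and> finite F})"
  proof (rule bdd_aboveI2)
    fix F :: "int set" assume "F \<in> {F. F \<subseteq> UNIV \<and> finite F}"
    then have "finite F" by simp
    have "sum (dist_Delta_term h x y) F \<le> (\<Sum>i\<in>F. (1/4::real) ^ nat \<bar>i\<bar>)"
      by (rule sum_mono) (use dist_Delta_term_bounds[OF assms] in blast)
    also have "\<dots> \<le> 2 / (1 - 1/4)" using \<open>finite F\<close> by (intro sum_power_nat_abs_le) auto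
    finally show "sum (dist_Delta_term h x y) F \<le> 8/3" by simp
  qed
qed

lemma dist_Delta_ge_1:
  assumes "h > 0" "\<And>s. 0 \<le> s \<Longrightarrow> s < h \<Longrightarrow> x s \<noteq> y s"
  shows "dist_Delta h x y \<ge> 1"
proof -
  have "integral {0..h} (\<lambda>t. if x t \<noteq> y t then 1 else 0::real) = integral {0..h} (\<lambda>_. 1::real)"
    by (rule integral_spike[of "{h}"]) (use assms(2) in auto)
  then have "dist_Delta_term h x y 0 = 1" using assms(1) unfolding dist_Delta_term_def by simp
  moreover have "(\<Sum>\<^sub>\<infinity>i\<in>{0}. dist_Delta_term h x y i) \<le> (\<Sum>\<^sub>\<infinity>i. dist_Delta_term h x y i)"
    using dist_Delta_term_summable[OF assms(1)] dist_Delta_term_bounds[OF assms(1)]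
    by (intro infsum_mono2) auto
  ultimately show ?thesis by (simp add: dist_Delta_eq_infsum)
qed

lemma dist_Delta_le_if_agree:
  assumes "h > 0"
    and agree: "\<And>i s. i < int L \<Longrightarrow> real_of_int i * h \<le> s \<Longrightarrow> s \<le> real_of_int (i + 1) * h \<Longrightarrow> x s = y s"
  shows "dist_Delta h x y \<le> 4 * (1/2) ^ L"
  unfolding dist_Delta_eq_infsum
proof (rule infsum_le_finite_sums[OF dist_Delta_term_summable[OF assms(1)]])
  fix F :: "int set" assume "finite F"
  have term_le: "dist_Delta_term h x y i \<le> (1/2) ^ L * (1/2) ^ nat \<bar>i\<bar>" for i
  proof (cases "i < int L")
    case True
    have "integral {real_of_int i * h .. real_of_int (i + 1) * h} (\<lambda>t. if x t \<noteq> y t then 1 else 0::real)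
        = integral {real_of_int i * h .. real_of_int (i + 1) * h} (\<lambda>_. 0::real)"
      by (rule integral_cong) (use agree True in auto)
    then show ?thesis unfolding dist_Delta_term_def by simp
  next
    case False
    have "(1/4::real) ^ nat \<bar>i\<bar> = (1/2) ^ nat \<bar>i\<bar> * (1/2) ^ nat \<bar>i\<bar>"
      by (simp add: power_mult_distrib[symmetric])
    also have "\<dots> \<le> (1/2) ^ L * (1/2) ^ nat \<bar>i\<bar>"
      using False by (intro mult_right_mono power_decreasing) auto
    finally show ?thesis using dist_Delta_term_bounds(2)[OF assms(1)] by (metis order_trans)
  qed
  have "sum (dist_Delta_term h x y) F \<le> (1/2) ^ L * (\<Sum>i\<in>F. (1/2) ^ nat \<bar>i\<bar>)"
    unfolding sum_distrib_left by (rule sum_mono) (rule term_le)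
  also have "\<dots> \<le> (1/2) ^ L * (2 / (1 - 1/2))"
    using \<open>finite F\<close> by (intro mult_left_mono sum_power_nat_abs_le) auto
  finally show "sum (dist_Delta_term h x y) F \<le> 4 * (1/2) ^ L" by simp
qed

lemma floor_divide_eq_iff:
  fixes s h :: real
  assumes "h > 0"
  shows "\<lfloor>s / h\<rfloor> = n \<longleftrightarrow> real_of_int n * h \<le> s \<and> s < (real_of_int n + 1) * h"
  using assms by (simp add: floor_eq_iff pos_le_divide_eq pos_divide_less_eq)

lemma Delta_bar_eq_step_functions:
  assumes "h > 0"
  shows "Delta_bar V E h = (\<lambda>\<omega> s. \<omega> \<lfloor>s / h\<rfloor>) ` bi_paths V E"
proof
  show "Delta_bar V E h \<subseteq> (\<lambda>\<omega> s. \<omega> \<lfloor>s / h\<rfloor>) ` bi_paths V E"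
  proof
    fix x assume x: "x \<in> Delta_bar V E h"
    have "x s = x (real_of_int \<lfloor>s / h\<rfloor> * h)" for s
      using x floor_divide_eq_iff[OF assms, of s "\<lfloor>s / h\<rfloor>"] unfolding Delta_bar_def by simp
    moreover have "(\<lambda>i. x (real_of_int i * h)) \<in> bi_paths V E"
      using x unfolding Delta_bar_def by blast
    ultimately show "x \<in> (\<lambda>\<omega> s. \<omega> \<lfloor>s / h\<rfloor>) ` bi_paths V E"
      by (intro image_eqI[of _ _ "\<lambda>i. x (real_of_int i * h)"]) auto
  qed
  show "(\<lambda>\<omega> s. \<omega> \<lfloor>s / h\<rfloor>) ` bi_paths V E \<subseteq> Delta_bar V E h"
    unfolding Delta_bar_def using assms floor_divide_eq_iff[OF assms] by auto (metis of_int_add of_int_1)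
qed

lemma Delta_eq_shifted_step_functions:
  assumes "h > 0"
  shows "Delta V E h = {(\<lambda>s. \<omega> \<lfloor>(s + t) / h\<rfloor>) | \<omega> t. \<omega> \<in> bi_paths V E}"
  unfolding Delta_def Delta_bar_eq_step_functions[OF assms] by fastforce

definition forward_paths :: "('v \<times> 'v) set \<Rightarrow> (nat \<Rightarrow> 'v) set" where
  "forward_paths E = {P. \<forall>n. (P n, P (Suc n)) \<in> E}"

lemma forward_path_exists:
  assumes "strongly_connected_single V E" "E \<subseteq> V \<times> V" "w \<in> V"
  shows "\<exists>P\<in>forward_paths E. P 0 = w"
proof -
  have "\<exists>w'\<in>V. (v, w') \<in> E" if "v \<in> V" for v
  proof -
    have "(v, v) \<in> E\<^sup>+" using assms(1) that unfolding strongly_connected_single_def by blast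
    then obtain w' where "(v, w') \<in> E" by (meson tranclD)
    then show ?thesis using assms(2) by blast
  qed
  then obtain succ where succ: "\<And>v. v \<in> V \<Longrightarrow> succ v \<in> V \<and> (v, succ v) \<in> E" by metis
  have "(succ ^^ n) w \<in> V" for n by (induction n) (auto simp: assms(3) succ)
  then have "(\<lambda>n. (succ ^^ n) w) \<in> forward_paths E"
    unfolding forward_paths_def by (simp add: succ)
  then show ?thesis by (intro bexI[of _ "\<lambda>n. (succ ^^ n) w"]) simp_all
qed

lemma forward_path_prepend:
  assumes "(u, v) \<in> E ^^ n" "P \<in> forward_paths E" "P 0 = v"
  shows "\<exists>Q\<in>forward_paths E. Q 0 = u \<and> (\<forall>m. Q (n + m) = P m)"
  using assms(1)
proof (induction n arbitrary: u)
  case 0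
  then show ?case using assms(2,3) by auto
next
  case (Suc n)
  then obtain u' where "(u, u') \<in> E" "(u', v) \<in> E ^^ n" by (meson relpow_Suc_D2)
  with Suc.IH obtain Q where Q: "Q \<in> forward_paths E" "Q 0 = u'" "\<forall>m. Q (n + m) = P m"
    by blast
  have "case_nat u Q \<in> forward_paths E"
    using Q(1,2) \<open>(u, u') \<in> E\<close> unfolding forward_paths_def by (auto split: nat.split)
  then show ?case using Q(3) by (intro bexI[of _ "case_nat u Q"]) simp_all
qed

lemma forward_paths_branch:
  assumes "strongly_connected_single V E" "E \<subseteq> V \<times> V" "\<exists>v\<in>V. out_degree E v \<ge> 2" "u \<in> V"
  shows "\<exists>P1\<in>forward_paths E. \<exists>P2\<in>forward_paths E. P1 0 = u \<and> P2 0 = u \<and> (\<exists>k. P1 k \<noteq> P2 k)"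
proof -
  obtain v where v: "v \<in> V" "card {w. (v, w) \<in> E} \<ge> 2"
    using assms(3) unfolding out_degree_def by blast
  then have "finite {w. (v, w) \<in> E}" using card.infinite by fastforce
  moreover have "\<not> card {w. (v, w) \<in> E} \<le> Suc 0" using v(2) by simp
  ultimately obtain w1 w2 where w: "(v, w1) \<in> E" "(v, w2) \<in> E" "w1 \<noteq> w2"
    by (auto simp: card_le_Suc0_iff_eq)
  have "(u, v) \<in> E\<^sup>+" using assms(1,4) v(1) unfolding strongly_connected_single_def by blast
  then obtain n where n: "(u, v) \<in> E ^^ n" using trancl_power by blast
  have through: "\<exists>Q\<in>forward_paths E. Q 0 = u \<and> Q (Suc n) = w" if vw: "(v, w) \<in> E" for w
  proof -
    have "w \<in> V" using vw assms(2) by blast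
    then obtain P where P: "P \<in> forward_paths E" "P 0 = w"
      using forward_path_exists[OF assms(1,2)] by blast
    have "(u, w) \<in> E ^^ Suc n" using n vw by (rule relpow_Suc_I)
    then obtain Q where "Q \<in> forward_paths E" "Q 0 = u" "\<forall>m. Q (Suc n + m) = P m"
      using forward_path_prepend[OF _ P] by blast
    then show ?thesis using P(2) by (intro bexI[of _ Q]) (simp_all, metis add_0_right)
  qed
  obtain Q1 Q2 where "Q1 \<in> forward_paths E" "Q2 \<in> forward_paths E" "Q1 0 = u" "Q2 0 = u"
    "Q1 (Suc n) = w1" "Q2 (Suc n) = w2"
    using through[OF w(1)] through[OF w(2)] by blast
  then show ?thesis using w(3) by blast
qed

lemma bi_path_splice:
  assumes "E \<subseteq> V \<times> V" "\<omega> \<in> bi_paths V E" "P \<in> forward_paths E" "P 0 = \<omega> N"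
  shows "(\<lambda>i. if i \<le> N then \<omega> i else P (nat (i - N))) \<in> bi_paths V E"
  unfolding bi_paths_def
proof (intro CollectI conjI allI)
  fix i :: int
  have step: "(P n, P (Suc n)) \<in> E" for n using assms(3) unfolding forward_paths_def by blast
  then show "(if i \<le> N then \<omega> i else P (nat (i - N))) \<in> V"
    using assms(1,2) unfolding bi_paths_def by auto
  consider "i < N" | "i = N" | "i > N" by linarith
  then show "(if i \<le> N then \<omega> i else P (nat (i - N)), if i + 1 \<le> N then \<omega> (i + 1) else P (nat (i + 1 - N))) \<in> E"
  proof cases
    case 1
    then show ?thesis using assms(2) unfolding bi_paths_def by auto
  next
    case 2
    then show ?thesis using assms(4) step[of 0] by simp
  next
    case 3
    then have "nat (i + 1 - N) = Suc (nat (i - N))" by simp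
    then show ?thesis using 3 step[of "nat (i - N)"] by simp
  qed
qed

lemma bi_path_deviation:
  assumes "strongly_connected_single V E" "E \<subseteq> V \<times> V" "\<exists>v\<in>V. out_degree E v \<ge> 2"
    and "\<omega> \<in> bi_paths V E"
  shows "\<exists>\<omega>'\<in>bi_paths V E. (\<forall>i\<le>N. \<omega>' i = \<omega> i) \<and> (\<exists>m>N. \<omega>' m \<noteq> \<omega> m)"
proof -
  have "\<omega> N \<in> V" using assms(4) unfolding bi_paths_def by blast
  then obtain P1 P2 k where "P1 \<in> forward_paths E" "P2 \<in> forward_paths E"
    "P1 0 = \<omega> N" "P2 0 = \<omega> N" "P1 k \<noteq> P2 k"
    using forward_paths_branch[OF assms(1-3)] by blast
  then obtain P where P: "P \<in> forward_paths E" "P 0 = \<omega> N" "P k \<noteq> \<omega> (N + int k)"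
    by metis
  then have "k > 0" by (cases k) auto
  let ?\<omega>' = "\<lambda>i. if i \<le> N then \<omega> i else P (nat (i - N))"
  have "?\<omega>' \<in> bi_paths V E" using bi_path_splice[OF assms(2,4) P(1,2)] .
  moreover have "?\<omega>' (N + int k) \<noteq> \<omega> (N + int k)" using P(3) \<open>k > 0\<close> by simp
  moreover have "N + int k > N" using \<open>k > 0\<close> by simp
  ultimately show ?thesis by (intro bexI[of _ ?\<omega>'] conjI exI[of _ "N + int k"]) simp_all
qed

lemma Delta_separating_neighbour:
  fixes x :: "real \<Rightarrow> 'v"
  assumes "h > 0" "x \<in> Delta V E h" "e > 0"
    and deviation: "\<And>\<omega> N. \<omega> \<in> bi_paths V E \<Longrightarrow>
      \<exists>\<omega>'\<in>bi_paths V E. (\<forall>i\<le>N. \<omega>' i = \<omega> i) \<and> (\<exists>m>N. \<omega>' m \<noteq> \<omega> m)"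
  shows "\<exists>y\<in>Delta V E h. dist_Delta h x y < e \<and> (\<exists>t>0. dist_Delta h (psi t x) (psi t y) \<ge> 1)"
proof -
  obtain \<omega> t0 where \<omega>: "\<omega> \<in> bi_paths V E" and x: "x = (\<lambda>s. \<omega> \<lfloor>(s + t0) / h\<rfloor>)"
    using assms(2) unfolding Delta_eq_shifted_step_functions[OF assms(1)] by blast
  obtain L :: nat where L: "(1/2::real) ^ L < e / 4"
    using real_arch_pow_inv[of "e / 4" "1/2"] assms(3) by auto
  define N where "N = int L + \<lceil>t0 / h\<rceil>"
  obtain \<omega>' m where \<omega>': "\<omega>' \<in> bi_paths V E" "\<And>i. i \<le> N \<Longrightarrow> \<omega>' i = \<omega> i" "m > N" "\<omega>' m \<noteq> \<omega> m"
    using deviation[OF \<omega>, of N] by blast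
  define y where "y = (\<lambda>s. \<omega>' \<lfloor>(s + t0) / h\<rfloor>)"
  have "y \<in> Delta V E h"
    unfolding Delta_eq_shifted_step_functions[OF assms(1)] y_def using \<omega>'(1) by blast
  have close: "dist_Delta h x y \<le> 4 * (1/2) ^ L"
  proof (rule dist_Delta_le_if_agree[OF assms(1)])
    fix i s assume i: "i < int L" "real_of_int i * h \<le> s" "s \<le> real_of_int (i + 1) * h"
    have "real_of_int (i + 1) * h \<le> real L * h"
      using i(1) assms(1) by (intro mult_right_mono) auto
    then have "(s + t0) / h \<le> real L + t0 / h"
      using i(3) assms(1) by (simp add: field_simps)
    also have "\<dots> \<le> real_of_int N" unfolding N_def using le_of_int_ceiling[of "t0 / h"] by simp
    finally have "\<lfloor>(s + t0) / h\<rfloor> \<le> N" by (simp add: floor_le_iff)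
    then show "x s = y s" unfolding x y_def using \<omega>'(2) by simp
  qed
  define t where "t = real_of_int m * h - t0"
  have "t > 0"
  proof -
    have "t0 / h < real_of_int m"
      using \<omega>'(3) le_of_int_ceiling[of "t0 / h"] unfolding N_def by linarith
    then show ?thesis unfolding t_def using assms(1) by (simp add: field_simps)
  qed
  moreover have "dist_Delta h (psi t x) (psi t y) \<ge> 1"
  proof (rule dist_Delta_ge_1[OF assms(1)])
    fix s assume "0 \<le> s" "s < h"
    then have "\<lfloor>(s + t + t0) / h\<rfloor> = m"
      unfolding t_def using assms(1) by (simp add: floor_divide_eq_iff algebra_simps)
    then show "psi t x s \<noteq> psi t y s" unfolding psi_def x y_def using \<omega>'(4) by simp
  qed
  moreover have "dist_Delta h x y < e" using close L by simp
  ultimately show ?thesis using \<open>y \<in> Delta V E h\<close> by blast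
qed

theorem mainTheorem11:
  fixes V :: "'v set" and E :: "('v \<times> 'v) set" and h :: real
  assumes "finite V" and "E \<subseteq> V \<times> V" and "h > 0"
    and "strongly_connected_single V E"
    and "\<exists>v\<in>V. out_degree E v \<ge> 2"
  shows "sensitive_dependence (Delta V E h) (dist_Delta h) psi"
  unfolding sensitive_dependence_def
proof (intro exI[of _ "1/2"] conjI ballI allI impI)
  fix x B assume x: "x \<in> Delta V E h" and "\<exists>e>0. {y \<in> Delta V E h. dist_Delta h x y < e} \<subseteq> B"
  then obtain e where e: "e > 0" "{y \<in> Delta V E h. dist_Delta h x y < e} \<subseteq> B" by blast
  obtain y t where "y \<in> Delta V E h" "dist_Delta h x y < e" "t > 0" "dist_Delta h (psi t x) (psi t y) \<ge> 1"
    using Delta_separating_neighbour[OF assms(3) x e(1) bi_path_deviation[OF assms(4,2,5)]] by blast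
  with e(2) show "\<exists>y\<in>B \<inter> Delta V E h. \<exists>t>0. 1/2 < dist_Delta h (psi t x) (psi t y)" by force
qed simp

end
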